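(* Let $\mathbf{C}=\mathbf{C}_1\,\dot\cup\,\mathbf{C}_2$, $\mathbf{B}\in\dot{\mathbb{P}}(\mathbb{L}(\mathbf{C}_1))$ with $|\mathbf{B}|=|\mathbf{C}_1|$, and let $\mathbf{C}'$ be a finite set of binary causes with $\mathbf{C}'\cap\mathbf{C}=\varnothing$ such that potential outcomes $D_{\mathbf{C}=\mathbf{c},\mathbf{C}'=\mathbf{c}'}(\omega)$ are defined. Suppose every $X'\in\mathbf{C}'$ is not causally influenced by $\mathbf{C}$, and the relativized consistency axiom $D_{\mathbf{C}=\mathbf{c},\mathbf{C}'=\mathbf{C}'(\omega)}(\omega)=D_{\mathbf{C}=\mathbf{c}}(\omega)$ holds for all $\omega,\mathbf{c}$. If $\mathbf{B}$ is irreducible for $\mathcal{D}(\mathbf{C},\Omega)$, then $\mathbf{B}$ is irreducible for $\mathcal{D}(\mathbf{C}\cup\mathbf{C}',\Omega)$.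
   Context: An event is a binary random variable on a population $\Omega$; $\overline{X}=1-X$; $\mathbb{L}(\mathbf{C})=\mathbf{C}\cup\{\overline{X}:X\in\mathbf{C}\}$; $\dot{\mathbb{P}}(\mathbb{L}(\mathbf{C}))$ is the set of subsets of $\mathbb{L}(\mathbf{C})$ not containing both $X$ and $\overline{X}$ for any $X$; $(L)_{\mathbf{c}}$ is the value of literal $L$ under assignment $\mathbf{c}$; $\bigwedge(\mathbf{B})=\min_{L\in\mathbf{B}}L$. For a set of causes $\mathbf{C}$, potential outcomes $\mathcal{D}(\mathbf{C},\Omega)$ are values $D_{\mathbf{c}}(\omega)\in\{0,1\}$ for all $\omega\in\Omega$ and assignments $\mathbf{c}$ to $\mathbf{C}$; $\mathbf{C}'(\omega)$ denotes the actual values of $\mathbf{C}'$ for $\omega$. A variable $X'$ is not causally influenced by $\mathbf{C}$ if for every $\omega$ its potential outcomes $X'_{\mathbf{C}=\mathbf{c}}(\omega)$ do not depend on $\mathbf{c}$. A sufficient cause representation $(\mathbf{A},\mathfrak{B})$ for $\mathcal{D}(\mathbf{C},\Omega)$ is a tuple $\mathbf{A}=\langle A_1,\dots,A_p\rangle$ of binary random variables on $\Omega$ unaffected by interventions on $\mathbf{C}$ and a tuple $\mathfrak{B}=\langle\mathbf{B}_1,\dots,\mathbf{B}_p\rangle$, $\mathbf{B}_i\in\dot{\mathbb{P}}(\mathbb{L}(\mathbf{C}))$, with: for all $\omega,\mathbf{c}$, $D_{\mathbf{c}}(\omega)=1$ iff some $j$ has $A_j(\omega)=1$ and $(\bigwedge(\mathbf{B}_j))_{\mathbf{c}}=1$.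 $\mathbf{B}\in\dot{\mathbb{P}}(\mathbb{L}(\mathbf{C}))$ is irreducible for $\mathcal{D}(\mathbf{C},\Omega)$ if in every such representation some $\mathbf{B}_i\in\mathfrak{B}$ satisfies $\mathbf{B}\subseteq\mathbf{B}_i$ (and analogously with $\mathbf{C}\cup\mathbf{C}'$ in place of $\mathbf{C}$). *)

theory Defs
  imports Main
begin

text \<open>Literals over a set of causes: a literal is a pair (X, b); (X, True) stands for X and
  (X, False) for its complement 1 - X.\<close>

definition lits :: "'v set \<Rightarrow> ('v \<times> bool) set" where
  "lits C = C \<times> UNIV"

definition dotP :: "'v set \<Rightarrow> ('v \<times> bool) set set" where
  "dotP C = {B. B \<subseteq> lits C \<and> (\<forall>X. \<not> ((X, True) \<in> B \<and> (X, False) \<in> B))}"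

text \<open>Assignments to the causes in C (values outside C fixed to False, canonical form).\<close>
definition assignments :: "'v set \<Rightarrow> ('v \<Rightarrow> bool) set" where
  "assignments C = {c. \<forall>v. v \<notin> C \<longrightarrow> c v = False}"

definition lit_val :: "('v \<Rightarrow> bool) \<Rightarrow> 'v \<times> bool \<Rightarrow> bool" where
  "lit_val c l = (c (fst l) = snd l)"

definition conj_val :: "('v \<Rightarrow> bool) \<Rightarrow> ('v \<times> bool) set \<Rightarrow> bool" where
  "conj_val c B = (\<forall>l\<in>B. lit_val c l)"

text \<open>A sufficient cause representation: a finite list of pairs (A_j, B_j), with A_j a binary
  random variable on the population (a function of the unit only, hence unaffected by
  interventions on C) and B_j in dotP(L(C)).\<close>
definition is_scr :: "'v set \<Rightarrow> (('v \<Rightarrow> bool) \<Rightarrow> 'w \<Rightarrow> bool) \<Rightarrow> 'w set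
    \<Rightarrow> (('w \<Rightarrow> bool) \<times> ('v \<times> bool) set) list \<Rightarrow> bool" where
  "is_scr C D \<Omega> R \<longleftrightarrow>
     (\<forall>(A, Bj) \<in> set R. Bj \<in> dotP C) \<and>
     (\<forall>\<omega>\<in>\<Omega>. \<forall>c\<in>assignments C.
        D c \<omega> \<longleftrightarrow> (\<exists>(A, Bj) \<in> set R. A \<omega> \<and> conj_val c Bj))"

definition irreducible :: "'v set \<Rightarrow> (('v \<Rightarrow> bool) \<Rightarrow> 'w \<Rightarrow> bool) \<Rightarrow> 'w set
    \<Rightarrow> ('v \<times> bool) set \<Rightarrow> bool" where
  "irreducible C D \<Omega> B \<longleftrightarrow> B \<in> dotP C \<and>
     (\<forall>R. is_scr C D \<Omega> R \<longrightarrow> (\<exists>(A, Bi) \<in> set R. B \<subseteq> Bi))"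

end

theory Submission
  imports Defs
begin

text \<open>Given a sufficient cause representation for D' over C \<union> C', fix the extra causes C' at
  their actual values C'(\<omega>): each conjunction B_j splits into its C'-part, which then depends on
  the unit only and can be absorbed into A_j, and its C-part B_j \<inter> L(C). By consistency this
  yields a representation for D over C, so irreducibility of B over C gives some
  B \<subseteq> B_j \<inter> L(C) \<subseteq> B_j.\<close>

definition fix_causes :: "'v set \<Rightarrow> 'v set \<Rightarrow> ('v \<Rightarrow> bool) \<Rightarrow> ('v \<Rightarrow> bool) \<Rightarrow> 'v \<Rightarrow> bool" where
  "fix_causes C C' c a = (\<lambda>v. if v \<in> C then c v else if v \<in> C' then a v else False)"

definition absorb_causes :: "'v set \<Rightarrow> ('w \<Rightarrow> 'v \<Rightarrow> bool)
    \<Rightarrow> (('w \<Rightarrow> bool) \<times> ('v \<times> bool) set) list \<Rightarrow> (('w \<Rightarrow> bool) \<times> ('v \<times> bool) set) list" where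
  "absorb_causes C act R =
     map (\<lambda>(A, Bj). (\<lambda>\<omega>. A \<omega> \<and> conj_val (act \<omega>) (Bj - lits C), Bj \<inter> lits C)) R"

lemma fix_causes_in_assignments: "fix_causes C C' c a \<in> assignments (C \<union> C')"
  unfolding fix_causes_def assignments_def by auto

lemma dotP_mono: "C \<subseteq> C' \<Longrightarrow> dotP C \<subseteq> dotP C'"
  unfolding dotP_def lits_def by auto

lemma Int_lits_in_dotP: "Bj \<in> dotP C' \<Longrightarrow> Bj \<inter> lits C \<in> dotP C"
  unfolding dotP_def lits_def by auto

lemma conj_val_fix_causes:
  assumes "Bj \<subseteq> lits (C \<union> C')"
  shows "conj_val (fix_causes C C' c a) Bj \<longleftrightarrow> conj_val a (Bj - lits C) \<and> conj_val c (Bj \<inter> lits C)"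
proof -
  have "lit_val (fix_causes C C' c a) l = (if l \<in> lits C then lit_val c l else lit_val a l)"
    if "l \<in> Bj" for l
    using that assms unfolding lits_def lit_val_def fix_causes_def by auto
  then show ?thesis
    unfolding conj_val_def by auto
qed

lemma is_scr_absorb_causes:
  assumes scr: "is_scr (C \<union> C') D' \<Omega> R"
    and consistent: "\<forall>\<omega>\<in>\<Omega>. \<forall>c\<in>assignments C. D' (fix_causes C C' c (act \<omega>)) \<omega> = D c \<omega>"
  shows "is_scr C D \<Omega> (absorb_causes C act R)"
proof -
  have dotP_R: "\<forall>(A, Bj) \<in> set R. Bj \<in> dotP (C \<union> C')"
    and repr: "\<forall>\<omega>\<in>\<Omega>. \<forall>c\<in>assignments (C \<union> C'). D' c \<omega> \<longleftrightarrow> (\<exists>(A, Bj) \<in> set R. A \<omega> \<and> conj_val c Bj)"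
    using scr unfolding is_scr_def by auto
  have absorbed_repr: "D c \<omega> \<longleftrightarrow> (\<exists>(A, Bj) \<in> set (absorb_causes C act R). A \<omega> \<and> conj_val c Bj)"
    if "\<omega> \<in> \<Omega>" "c \<in> assignments C" for \<omega> c
  proof -
    have "D c \<omega> \<longleftrightarrow> (\<exists>(A, Bj) \<in> set R. A \<omega> \<and> conj_val (fix_causes C C' c (act \<omega>)) Bj)"
      using that consistent repr fix_causes_in_assignments by fastforce
    also have "\<dots> \<longleftrightarrow> (\<exists>(A, Bj) \<in> set R. A \<omega> \<and> conj_val (act \<omega>) (Bj - lits C) \<and> conj_val c (Bj \<inter> lits C))"
    proof -
      have "conj_val (fix_causes C C' c (act \<omega>)) Bj \<longleftrightarrow> conj_val (act \<omega>) (Bj - lits C) \<and> conj_val c (Bj \<inter> lits C)"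
        if "(A, Bj) \<in> set R" for A Bj
        using that dotP_R by (intro conj_val_fix_causes) (auto simp: dotP_def)
      then show ?thesis by auto
    qed
    also have "\<dots> \<longleftrightarrow> (\<exists>(A, Bj) \<in> set (absorb_causes C act R). A \<omega> \<and> conj_val c Bj)"
      unfolding absorb_causes_def by (force simp: split_beta)
    finally show ?thesis .
  qed
  have "\<forall>(A, Bj) \<in> set (absorb_causes C act R). Bj \<in> dotP C"
    using dotP_R unfolding absorb_causes_def by (auto simp: Int_lits_in_dotP)
  then show ?thesis
    unfolding is_scr_def by (simp add: absorbed_repr)
qed

lemma irreducible_add_causes:
  assumes irr: "irreducible C D \<Omega> B"
    and consistent: "\<forall>\<omega>\<in>\<Omega>. \<forall>c\<in>assignments C. D' (fix_causes C C' c (act \<omega>)) \<omega> = D c \<omega>"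
  shows "irreducible (C \<union> C') D' \<Omega> B"
  unfolding irreducible_def
proof (intro conjI allI impI)
  show "B \<in> dotP (C \<union> C')"
    using irr dotP_mono[of C "C \<union> C'"] unfolding irreducible_def by auto
next
  fix R assume "is_scr (C \<union> C') D' \<Omega> R"
  then have "is_scr C D \<Omega> (absorb_causes C act R)"
    using consistent by (rule is_scr_absorb_causes)
  then have "\<exists>(A, Bi) \<in> set (absorb_causes C act R). B \<subseteq> Bi"
    using irr unfolding irreducible_def by simp
  then obtain A Bi where "(A, Bi) \<in> set (absorb_causes C act R)" "B \<subseteq> Bi"
    by blast
  then show "\<exists>(A, Bi) \<in> set R. B \<subseteq> Bi"
    unfolding absorb_causes_def by auto
qed

theorem mainTheorem5:
  fixes C1 C2 C' :: "'v set" and \<Omega> :: "'w set" and B :: "('v \<times> bool) set"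
    and D :: "('v \<Rightarrow> bool) \<Rightarrow> 'w \<Rightarrow> bool"
    and D' :: "('v \<Rightarrow> bool) \<Rightarrow> 'w \<Rightarrow> bool"
    and Cact :: "'v \<Rightarrow> 'w \<Rightarrow> bool"
    and Xpot :: "'v \<Rightarrow> ('v \<Rightarrow> bool) \<Rightarrow> 'w \<Rightarrow> bool"
  assumes "finite C1" and "finite C2" and "C1 \<inter> C2 = {}"
    and "B \<in> dotP C1" and "card B = card C1"
    and "finite C'" and "C' \<inter> (C1 \<union> C2) = {}"
    and "\<forall>X\<in>C'. \<forall>\<omega>\<in>\<Omega>. \<forall>c\<in>assignments (C1 \<union> C2). \<forall>c2\<in>assignments (C1 \<union> C2).
           Xpot X c \<omega> = Xpot X c2 \<omega>"
    and "\<forall>\<omega>\<in>\<Omega>. \<forall>c\<in>assignments (C1 \<union> C2).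
           D' (\<lambda>v. if v \<in> C1 \<union> C2 then c v else if v \<in> C' then Cact v \<omega> else False) \<omega>
           = D c \<omega>"
    and "irreducible (C1 \<union> C2) D \<Omega> B"
  shows "irreducible (C1 \<union> C2 \<union> C') D' \<Omega> B"
proof (rule irreducible_add_causes)
  show "irreducible (C1 \<union> C2) D \<Omega> B" by fact
  show "\<forall>\<omega>\<in>\<Omega>. \<forall>c\<in>assignments (C1 \<union> C2).
          D' (fix_causes (C1 \<union> C2) C' c (\<lambda>v. Cact v \<omega>)) \<omega> = D c \<omega>"
    using assms(9) unfolding fix_causes_def .
qed

end
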